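(* Let $\varphi$ be an endomorphism of $F_n$ and $K=\max\{|a\varphi|: a\in A\cup A^{-1}\}$. If $\varphi$ is almost length-increasing, then $|u\varphi|\geq|u|-K$ for every $u\in F_n$.
   Context: $F_n$ is the free group on a finite basis $A$; elements are reduced words over $A\cup A^{-1}$ and $|u|$ is the length; maps are written on the right. An endomorphism $\varphi$ is almost length-increasing if $|u\varphi|<|u|$ for only finitely many $u\in F_n$. *)

theory Defs
  imports Main
begin

text \<open>A letter is a pair (a, e) with a a basis
element and e = True meaning the formal inverse a^-1. Elements of F(A) are
reduced words over these letters; maps are written on the right in the paper,
here as ordinary functions on words.\<close>

type_synonym 'a letter = "'a \<times> bool"

fun inv_letter :: "'a letter \<Rightarrow> 'a letter" where
  "inv_letter (a, e) = (a, \<not> e)"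

fun reduced :: "'a letter list \<Rightarrow> bool" where
  "reduced (x # y # xs) = (y \<noteq> inv_letter x \<and> reduced (y # xs))"
| "reduced _ = True"

fun red :: "'a letter list \<Rightarrow> 'a letter list" where
  "red [] = []"
| "red (x # xs) = (case red xs of
       [] \<Rightarrow> [x]
     | y # ys \<Rightarrow> (if y = inv_letter x then ys else x # y # ys))"

definition FG :: "'a set \<Rightarrow> 'a letter list set" where
  "FG A = {w. set w \<subseteq> A \<times> UNIV \<and> reduced w}"

definition fg_mult :: "'a letter list \<Rightarrow> 'a letter list \<Rightarrow> 'a letter list" where
  "fg_mult u v = red (u @ v)"

definition fg_endo :: "'a set \<Rightarrow> ('a letter list \<Rightarrow> 'a letter list) \<Rightarrow> bool" where
  "fg_endo A \<phi> \<longleftrightarrow> (\<forall>u\<in>FG A. \<phi> u \<in> FG A) \<and>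
     (\<forall>u\<in>FG A. \<forall>v\<in>FG A. \<phi> (fg_mult u v) = fg_mult (\<phi> u) (\<phi> v))"

definition almost_length_increasing ::
  "'a set \<Rightarrow> ('a letter list \<Rightarrow> 'a letter list) \<Rightarrow> bool" where
  "almost_length_increasing A \<phi> \<longleftrightarrow> finite {u \<in> FG A. length (\<phi> u) < length u}"

end

theory Submission
  imports Defs
begin

text \<open>Suppose some reduced word u satisfies |u\<phi>| < |u| - K. Since u is reduced there is a
letter y of u such that the concatenation u y u is again reduced (y = last u if u is cyclically
reduced, otherwise a letter distinct from both ends). Then |(u y u)\<phi>| \<le> 2|u\<phi>| + K <
|u y u| - K, so u y u is a strictly longer word that \<phi> also shortens by more than K. Iterating gives infinitely
many words shortened by \<phi>, contradicting almost length-increase.\<close>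

lemma inv_letter_inv_letter [simp]: "inv_letter (inv_letter x) = x"
  by (cases x) auto

lemma inv_letter_neq: "inv_letter x \<noteq> x"
  by (cases x) auto

lemma inv_letter_eq_iff [simp]: "inv_letter x = inv_letter y \<longleftrightarrow> x = y"
  by (metis inv_letter_inv_letter)

lemma length_red_le: "length (red w) \<le> length w"
  by (induction w) (auto split: list.splits)

lemma reduced_ConsD: "reduced (x # xs) \<Longrightarrow> reduced xs"
  by (cases xs) auto

lemma red_reduced: "reduced w \<Longrightarrow> red w = w"
proof (induction w)
  case (Cons x xs)
  then have "red xs = xs" using reduced_ConsD by blast
  with Cons.prems show ?case by (cases xs) auto
qed simp

lemma reduced_append:
  "reduced (xs @ ys) \<longleftrightarrow> reduced xs \<and> reduced ys \<and>
     (xs = [] \<or> ys = [] \<or> hd ys \<noteq> inv_letter (last xs))"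
proof (induction xs)
  case (Cons a xs)
  then show ?case by (cases xs; cases ys) auto
qed simp

lemma reduced_Cons_letters_subset:
  "reduced (x # xs) \<Longrightarrow> set xs \<subseteq> {x, inv_letter x} \<Longrightarrow> set xs \<subseteq> {x}"
  by (induction xs) auto

lemma reduced_inner_letter:
  assumes "reduced u" "u \<noteq> []" "hd u = inv_letter (last u)"
  shows "\<exists>y\<in>set u. y \<noteq> hd u \<and> y \<noteq> last u"
proof (rule ccontr)
  obtain x xs where u: "u = x # xs" using assms(2) by (cases u) auto
  have "last u = inv_letter x" using assms(3) u by (metis inv_letter_inv_letter list.sel(1))
  moreover assume "\<not> ?thesis"
  ultimately have "set xs \<subseteq> {x, inv_letter x}" using u by auto
  then have "set xs \<subseteq> {x}" using reduced_Cons_letters_subset assms(1) u by blast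
  then have "last u = x" using u by (cases "xs = []") (auto dest: last_in_set)
  then show False using \<open>last u = inv_letter x\<close> inv_letter_neq[of x] by simp
qed

lemma reduced_append_Cons_selfI:
  assumes "reduced u" "u \<noteq> []" "y \<noteq> inv_letter (last u)" "hd u \<noteq> inv_letter y"
  shows "reduced (u @ y # u)"
proof -
  have "reduced (y # u)" using assms(1,2,4) by (cases u) auto
  then show ?thesis using assms(1,3) reduced_append[of u "y # u"] by simp
qed

lemma ex_reduced_append_Cons_self:
  assumes "reduced u" "u \<noteq> []"
  shows "\<exists>y\<in>set u. reduced (u @ y # u)"
proof (cases "hd u = inv_letter (last u)")
  case True
  then obtain y where y: "y \<in> set u" "y \<noteq> hd u" "y \<noteq> last u"
    using reduced_inner_letter assms by blast
  then have "y \<noteq> inv_letter (last u)" "hd u \<noteq> inv_letter y"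
    using True by auto
  with assms y show ?thesis using reduced_append_Cons_selfI by blast
next
  case False
  then have "hd u \<noteq> inv_letter (last u)" "last u \<noteq> inv_letter (last u)"
    using inv_letter_neq by metis+
  with assms show ?thesis using reduced_append_Cons_selfI last_in_set by metis
qed

lemma FG_appendD: "xs @ ys \<in> FG A \<Longrightarrow> xs \<in> FG A \<and> ys \<in> FG A"
  unfolding FG_def by (auto simp: reduced_append)

lemma fg_mult_reduced: "reduced (u @ v) \<Longrightarrow> fg_mult u v = u @ v"
  unfolding fg_mult_def by (rule red_reduced)

lemma fg_endo_length_append_le:
  assumes "fg_endo A \<phi>" "u @ v \<in> FG A"
  shows "length (\<phi> (u @ v)) \<le> length (\<phi> u) + length (\<phi> v)"
proof -
  have "u \<in> FG A" "v \<in> FG A" using FG_appendD assms(2) by blast+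
  moreover have "fg_mult u v = u @ v"
    using assms(2) fg_mult_reduced unfolding FG_def by blast
  ultimately have "\<phi> (u @ v) = fg_mult (\<phi> u) (\<phi> v)"
    using assms(1) unfolding fg_endo_def by metis
  then show ?thesis unfolding fg_mult_def using length_red_le by (metis length_append)
qed

lemma fg_endo_shortened_word_extends:
  assumes "fg_endo A \<phi>" and K: "\<And>x. x \<in> A \<times> UNIV \<Longrightarrow> length (\<phi> [x]) \<le> K"
    and u: "u \<in> FG A" "length (\<phi> u) + K < length u"
  shows "\<exists>w\<in>FG A. length u < length w \<and> length (\<phi> w) + K < length w"
proof -
  have "u \<noteq> []" using u by auto
  moreover have "reduced u" "set u \<subseteq> A \<times> UNIV" using u(1) unfolding FG_def by auto
  ultimately obtain y where y: "y \<in> A \<times> UNIV" and r: "reduced ((u @ [y]) @ u)"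
    using ex_reduced_append_Cons_self by fastforce
  define w where "w = (u @ [y]) @ u"
  have w: "w \<in> FG A" using r y \<open>set u \<subseteq> A \<times> UNIV\<close> unfolding w_def FG_def by auto
  have "length (\<phi> w) \<le> length (\<phi> (u @ [y])) + length (\<phi> u)"
    using fg_endo_length_append_le[OF assms(1)] w unfolding w_def by blast
  also have "\<dots> \<le> length (\<phi> u) + length (\<phi> [y]) + length (\<phi> u)"
    using fg_endo_length_append_le[OF assms(1)] FG_appendD w unfolding w_def by fastforce
  also have "\<dots> \<le> 2 * length (\<phi> u) + K" using K[OF y] by simp
  finally have "length (\<phi> w) + K < length w" using u(2) unfolding w_def by simp
  moreover have "length u < length w" unfolding w_def by simp
  ultimately show ?thesis using w by blast
qed

theorem mainTheorem12:
  fixes A :: "'a set" and \<phi> :: "'a letter list \<Rightarrow> 'a letter list"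
  assumes "finite A"
    and "fg_endo A \<phi>"
    and "almost_length_increasing A \<phi>"
  shows "\<forall>u \<in> FG A. int (length (\<phi> u)) \<ge>
           int (length u) - int (Max {length (\<phi> [x]) | x. x \<in> A \<times> UNIV})"
proof -
  define K where "K = Max {length (\<phi> [x]) | x. x \<in> A \<times> UNIV}"
  have "{length (\<phi> [x]) | x. x \<in> A \<times> UNIV} = (\<lambda>x. length (\<phi> [x])) ` (A \<times> UNIV)"
    by blast
  then have "finite {length (\<phi> [x]) | x. x \<in> A \<times> UNIV}"
    using assms(1) by simp
  then have K: "length (\<phi> [x]) \<le> K" if "x \<in> A \<times> UNIV" for x
    unfolding K_def using that by (intro Max_ge) auto
  define S where "S = {u \<in> FG A. length (\<phi> u) + K < length u}"
  have "finite S"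
    using assms(3) unfolding almost_length_increasing_def S_def
    by (rule rev_finite_subset) auto
  moreover have "\<exists>m\<in>length ` S. n < m" if "n \<in> length ` S" for n
    using that fg_endo_shortened_word_extends[OF assms(2) K] unfolding S_def by fastforce
  ultimately have "S = {}" using infinite_growing[of "length ` S"] by blast
  then show ?thesis unfolding S_def K_def by force
qed

end
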